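(* Let $(e_{m,n})_{m,n\in\mathbb N}$ be nonnegative random variables such that for each $n\in\mathbb N$, $(e_{m,n})_{m\in\mathbb N}$ is an asymptotic e-variable for $\mathcal P$. For $m,n\in\mathbb N$ set $\mathcal F_{m,n}=\sigma(e_{m,i}: i\le n)$ and $E_{m,n}=\prod_{i=0}^n e_{m,i}$. Assume that for every $m\in\mathbb N$ there is $d_m\ge 0$ with $$\mathbb E_P[e_{m,n+1}\mid\mathcal F_{m,n}]\le 1+d_m\quad P\text{-a.s., for all }P\in\mathcal P,\ n\in\mathbb N.$$ If $d_m\to0$ as $m\to\infty$, then $E$ has the asymptotic supermartingale property for $\mathcal F$ uniformly in $\mathcal P$; and in this case $E$ is an $r$-asymptotic e-process for $\mathcal P$ and $\mathcal F$ for every integer sequence $r=(r_m)_{m\in\mathbb N}\subset\mathbb N$ with $r_md_m\to0$ as $m\to\infty$.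
   Context: $(\Omega,\mathcal A)$ is a measurable space, $\mathcal P$ a set of probability measures on it, $\mathbb N=\{0,1,\dots\}$. Nonnegative random variables take values in $[0,\infty]$ with $\mathbb E_P[X]:=\infty$ if not $P$-integrable; $X_\infty:=\limsup_nX_n$. A sequence of nonnegative random variables $(e_m)_{m\in\mathbb N}$ is a (uniformly strongly) asymptotic e-variable for $\mathcal P$ if $\limsup_{m\to\infty}\sup_{P\in\mathcal P}\mathbb E_P[e_m]\le1$. For $P\in\mathcal P$, $\delta_{m,n}=\mathbb E_P[E_{m,n+1}\mid\mathcal F_{m,n}]-E_{m,n}$ if $E_{m,n+1}$ is $P$-integrable and $\delta_{m,n}=\infty$ otherwise; $x^+=\max\{x,0\}$; $E$ has the asymptotic supermartingale property if $\lim_m\sup_{P\in\mathcal P}\mathbb E_P[\delta^+_{m,n}]=0$ for every $n$. For a filtration $\mathcal G$ and $\rho\in\mathbb N\cup\{\infty\}$, $\mathcal T(\rho,\mathcal G,\mathcal P)$ is the set of $\mathcal G$-stopping times $\tau$ (values in $\mathbb N\cup\{\infty\}$) with $P[\tau\le\rho]=1$ for all $P\in\mathcal P$; $\mathcal T(r,\mathcal F,\mathcal P)$ is the set of sequences $(\tau_m)$ with $\tau_m\in\mathcal T(r_m,\mathcal F_{m,\bullet},\mathcal P)$. $E$ is an $r$-asymptotic e-process if for every $\tau\in\mathcal T(r,\mathcal F,\mathcal P)$, $\limsup_m\sup_{P\in\mathcal P}\mathbb E_P[E_{m,\tau_m}]\le1$. *)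

theory Defs
  imports "HOL-Probability.Probability"
begin

text \<open>Setting: the measurable space is given by a measure M (only space M and sets M matter);
  the family of probability measures is a set Ps of measures on the same measurable space.
  Nonnegative random variables take values in ennreal = [0,\<infinity>]; expectations of nonnegative
  variables are nonnegative Lebesgue integrals (which are \<infinity> exactly when not integrable).\<close>

definition prob_family :: "'a measure \<Rightarrow> 'a measure set \<Rightarrow> bool" where
  "prob_family M Ps \<longleftrightarrow> (\<forall>P\<in>Ps. prob_space P \<and> sets P = sets M)"

definition asymp_evar :: "'a measure set \<Rightarrow> (nat \<Rightarrow> 'a \<Rightarrow> ennreal) \<Rightarrow> bool" where
  "asymp_evar Ps e \<longleftrightarrow> limsup (\<lambda>m. SUP P\<in>Ps. \<integral>\<^sup>+ x. e m x \<partial>P) \<le> 1"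

definition gen_filt :: "'a measure \<Rightarrow> (nat \<Rightarrow> nat \<Rightarrow> 'a \<Rightarrow> ennreal) \<Rightarrow> nat \<Rightarrow> nat \<Rightarrow> 'a measure" where
  "gen_filt M e m n =
     sigma (space M) (\<Union>i\<in>{..n}. {e m i -` B \<inter> space M | B. B \<in> sets borel})"

definition prod_proc :: "(nat \<Rightarrow> nat \<Rightarrow> 'a \<Rightarrow> ennreal) \<Rightarrow> nat \<Rightarrow> nat \<Rightarrow> 'a \<Rightarrow> ennreal" where
  "prod_proc e m n x = (\<Prod>i\<in>{..n}. e m i x)"

text \<open>Positive part of delta_{m,n}: delta = E_P[E_{m,n+1} | F_{m,n}] - E_{m,n} if E_{m,n+1} is
  P-integrable, and \<infinity> otherwise.  Truncated ennreal subtraction yields exactly the positive part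
  (with a - \<infinity> = 0 for finite a, i.e. (-\<infinity>)^+ = 0).\<close>
definition delta_pos ::
  "'a measure \<Rightarrow> (nat \<Rightarrow> 'a measure) \<Rightarrow> (nat \<Rightarrow> 'a \<Rightarrow> ennreal) \<Rightarrow> nat \<Rightarrow> 'a \<Rightarrow> ennreal" where
  "delta_pos P F E n x =
     (if (\<integral>\<^sup>+ y. E (Suc n) y \<partial>P) < \<infinity>
      then nn_cond_exp P (F n) (E (Suc n)) x - E n x
      else \<infinity>)"

definition asymp_supermart ::
  "'a measure set \<Rightarrow> (nat \<Rightarrow> nat \<Rightarrow> 'a measure) \<Rightarrow> (nat \<Rightarrow> nat \<Rightarrow> 'a \<Rightarrow> ennreal) \<Rightarrow> bool" where
  "asymp_supermart Ps F E \<longleftrightarrow>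
     (\<forall>n. (\<lambda>m. SUP P\<in>Ps. \<integral>\<^sup>+ x. delta_pos P (F m) (E m) n x \<partial>P) \<longlonglongrightarrow> 0)"

definition enat_stopping_time :: "(nat \<Rightarrow> 'a measure) \<Rightarrow> ('a \<Rightarrow> enat) \<Rightarrow> bool" where
  "enat_stopping_time G \<tau> \<longleftrightarrow> (\<forall>n. {x\<in>space (G n). \<tau> x \<le> enat n} \<in> sets (G n))"

definition bounded_stopping_times ::
  "enat \<Rightarrow> (nat \<Rightarrow> 'a measure) \<Rightarrow> 'a measure set \<Rightarrow> ('a \<Rightarrow> enat) set" where
  "bounded_stopping_times \<rho> G Ps =
     {\<tau>. enat_stopping_time G \<tau> \<and> (\<forall>P\<in>Ps. AE x in P. \<tau> x \<le> \<rho>)}"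

definition stopped :: "(nat \<Rightarrow> 'a \<Rightarrow> ennreal) \<Rightarrow> ('a \<Rightarrow> enat) \<Rightarrow> 'a \<Rightarrow> ennreal" where
  "stopped X \<tau> x = (case \<tau> x of enat n \<Rightarrow> X n x | \<infinity> \<Rightarrow> limsup (\<lambda>n. X n x))"

definition r_asymp_eproc ::
  "(nat \<Rightarrow> nat) \<Rightarrow> 'a measure set \<Rightarrow> (nat \<Rightarrow> nat \<Rightarrow> 'a measure) \<Rightarrow> (nat \<Rightarrow> nat \<Rightarrow> 'a \<Rightarrow> ennreal) \<Rightarrow> bool" where
  "r_asymp_eproc r Ps F E \<longleftrightarrow>
     (\<forall>\<tau>. (\<forall>m. \<tau> m \<in> bounded_stopping_times (enat (r m)) (F m) Ps) \<longrightarrow>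
        limsup (\<lambda>m. SUP P\<in>Ps. \<integral>\<^sup>+ x. stopped (E m) (\<tau> m) x \<partial>P) \<le> 1)"

end

theory Submission
  imports Defs
begin

(* Conditioning on F_{m,k} multiplies the expectation of the product by at most 1 + d_m for each
   further factor. Stopping at tau only drops factors, and whether factor k + 1 is still used is
   decided in F_{m,k}, so E_P[E_{m,tau}] <= (1 + d_m)^{r_m} E_P[e_{m,0}] whenever tau <= r_m.
   Likewise delta^+_{m,n} <= d_m E_{m,n}, whence E_P[delta^+_{m,n}] <= d_m (1 + d_m)^n E_P[e_{m,0}].
   Since (1 + d_m)^{r_m} <= exp (r_m d_m) --> 1, both claims follow from
   limsup_m sup_P E_P[e_{m,0}] <= 1; the other e_{m,n} need not be asymptotic e-variables. *)

lemma ennreal_limsup_mult_le: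
  fixes a b :: "nat \<Rightarrow> ennreal"
  assumes "\<not> ((limsup a = 0 \<and> limsup b = \<infinity>) \<or> (limsup a = \<infinity> \<and> limsup b = 0))"
  shows "limsup (\<lambda>n. a n * b n) \<le> limsup a * limsup b"
proof -
  define A where "A n = (SUP k\<in>{n..}. a k)" for n
  define B where "B n = (SUP k\<in>{n..}. b k)" for n
  have "A \<longlonglongrightarrow> limsup a"
    unfolding limsup_INF_SUP A_def by (rule LIMSEQ_INF) (auto simp: decseq_def intro!: SUP_subset_mono)
  moreover have "B \<longlonglongrightarrow> limsup b"
    unfolding limsup_INF_SUP B_def by (rule LIMSEQ_INF) (auto simp: decseq_def intro!: SUP_subset_mono)
  ultimately have AB: "(\<lambda>n. A n * B n) \<longlonglongrightarrow> limsup a * limsup b"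
    using assms by (rule tendsto_mult_ennreal)
  have "limsup (\<lambda>n. a n * b n) \<le> A n * B n" for n
  proof -
    have "limsup (\<lambda>n. a n * b n) \<le> (SUP k\<in>{n..}. a k * b k)"
      unfolding limsup_INF_SUP by (rule INF_lower) simp
    also have "\<dots> \<le> A n * B n"
      unfolding A_def B_def by (intro SUP_least mult_mono SUP_upper) auto
    finally show ?thesis .
  qed
  then show ?thesis
    by (intro tendsto_lowerbound[OF AB]) auto
qed

lemma limsup_le_of_eventually_le_mult:
  fixes D a S :: "nat \<Rightarrow> ennreal"
  assumes "eventually (\<lambda>m. D m \<le> a m * S m) sequentially"
    and "a \<longlonglongrightarrow> \<alpha>" "\<alpha> \<noteq> \<infinity>" and "limsup S \<le> 1"
  shows "limsup D \<le> \<alpha>"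
proof -
  have "limsup a = \<alpha>"
    using assms(2) by (intro lim_imp_Limsup) simp_all
  moreover have "limsup S \<noteq> \<infinity>"
    using assms(4) ennreal_one_less_top by (auto simp: top_unique)
  moreover have "limsup D \<le> limsup (\<lambda>m. a m * S m)"
    using assms(1) by (rule Limsup_mono)
  ultimately show ?thesis
    using ennreal_limsup_mult_le[of a S] assms(3,4) mult_left_mono[OF assms(4), of \<alpha>] by auto
qed

lemma tendsto_one_plus_power:
  fixes d :: "nat \<Rightarrow> real" and r :: "nat \<Rightarrow> nat"
  assumes "\<And>m. 0 \<le> d m" and "(\<lambda>m. real (r m) * d m) \<longlonglongrightarrow> 0"
  shows "(\<lambda>m. (1 + d m) ^ r m) \<longlonglongrightarrow> 1"
proof (rule tendsto_sandwich)
  show "\<forall>\<^sub>F m in sequentially. 1 \<le> (1 + d m) ^ r m"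
    using assms(1) by simp
  have "(1 + d m) ^ r m \<le> exp (d m) ^ r m" for m
    using assms(1) by (intro power_mono) (auto simp: add.commute exp_ge_add_one_self)
  then show "\<forall>\<^sub>F m in sequentially. (1 + d m) ^ r m \<le> exp (real (r m) * d m)"
    by (simp add: exp_of_nat_mult)
  show "(\<lambda>m. exp (real (r m) * d m)) \<longlonglongrightarrow> 1"
    using tendsto_exp[OF assms(2)] by simp
qed simp

lemma (in sigma_finite_subalgebra) nn_integral_mult_le_of_nn_cond_exp_le:
  assumes g: "g \<in> borel_measurable F" and X: "X \<in> borel_measurable M"
    and le: "AE x in M. nn_cond_exp M F X x \<le> c"
  shows "(\<integral>\<^sup>+x. g x * X x \<partial>M) \<le> c * (\<integral>\<^sup>+x. g x \<partial>M)"
proof -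
  have "(\<integral>\<^sup>+x. g x * X x \<partial>M) = (\<integral>\<^sup>+x. g x * nn_cond_exp M F X x \<partial>M)"
    by (rule nn_cond_exp_intg[symmetric, OF g X])
  also have "\<dots> \<le> (\<integral>\<^sup>+x. g x * c \<partial>M)"
    using le by (intro nn_integral_mono_AE) (auto elim!: eventually_mono intro: mult_left_mono)
  also have "\<dots> = c * (\<integral>\<^sup>+x. g x \<partial>M)"
    using measurable_from_subalg[OF subalg g] by (simp add: nn_integral_cmult mult.commute)
  finally show ?thesis .
qed

(* E_{min(tau, k)}: factor i is used iff i <= tau *)
definition stopped_prod :: "(nat \<Rightarrow> 'a \<Rightarrow> ennreal) \<Rightarrow> ('a \<Rightarrow> enat) \<Rightarrow> nat \<Rightarrow> 'a \<Rightarrow> ennreal" where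
  "stopped_prod f \<tau> k x = (\<Prod>i\<in>{..k}. if enat i \<le> \<tau> x then f i x else 1)"

lemma stopped_prod_0 [simp]: "stopped_prod f \<tau> 0 x = f 0 x"
  by (simp add: stopped_prod_def zero_enat_def[symmetric])

lemma stopped_prod_Suc:
  "stopped_prod f \<tau> (Suc k) x =
     (if \<tau> x \<le> enat k then stopped_prod f \<tau> k x else stopped_prod f \<tau> k x * f (Suc k) x)"
  by (simp add: stopped_prod_def Suc_ile_eq not_le)

lemma stopped_prod_infinity: "stopped_prod f (\<lambda>_. \<infinity>) k x = (\<Prod>i\<in>{..k}. f i x)"
  by (simp add: stopped_prod_def)

lemma stopped_eq_stopped_prod:
  assumes "\<tau> x \<le> enat k"
  shows "stopped (\<lambda>n x. \<Prod>i\<in>{..n}. f i x) \<tau> x = stopped_prod f \<tau> k x"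
proof -
  obtain j where j: "\<tau> x = enat j" "j \<le> k"
    using assms by (cases "\<tau> x") auto
  have "stopped_prod f \<tau> k x = (\<Prod>i\<in>{..j}. f i x)"
    unfolding stopped_prod_def using j by (intro prod.mono_neutral_cong_right) auto
  then show ?thesis
    by (simp add: stopped_def j)
qed

lemma enat_stopping_time_infinity: "enat_stopping_time F (\<lambda>_. \<infinity>)"
  by (simp add: enat_stopping_time_def)

locale cond_bounded_factors = prob_space P for P :: "'a measure" +
  fixes F :: "nat \<Rightarrow> 'a measure" and f :: "nat \<Rightarrow> 'a \<Rightarrow> ennreal" and c :: ennreal
  assumes subalgebra_F: "subalgebra P (F n)"
    and F_mono: "k \<le> n \<Longrightarrow> sets (F k) \<subseteq> sets (F n)"
    and adapted: "f n \<in> borel_measurable (F n)"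
    and nn_cond_exp_le: "AE x in P. nn_cond_exp P (F n) (f (Suc n)) x \<le> 1 + c"
begin

lemma space_F [simp]: "space (F n) = space P"
  using subalgebra_F by (simp add: subalgebra_def)

lemma sigma_finite_subalgebra_F: "sigma_finite_subalgebra P (F n)"
  by (intro finite_measure_subalgebra_is_sigma_finite finite_measure_subalgebra.intro
      finite_measure_subalgebra_axioms.intro subalgebra_F finite_measure_axioms)

lemma borel_measurable_F_imp_P: "g \<in> borel_measurable (F n) \<Longrightarrow> g \<in> borel_measurable P"
  by (rule measurable_from_subalg[OF subalgebra_F])

lemma adapted_le: "i \<le> n \<Longrightarrow> f i \<in> borel_measurable (F n)"
  by (rule measurable_from_subalg[OF _ adapted]) (simp add: subalgebra_def F_mono)

lemma borel_measurable_partial_prod: "(\<lambda>x. \<Prod>i\<in>{..n}. f i x) \<in> borel_measurable (F n)"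
  by (intro borel_measurable_prod_ennreal adapted_le) simp

lemma sets_enat_le_stopping_time:
  assumes \<tau>: "enat_stopping_time F \<tau>" and "i \<le> n"
  shows "{x \<in> space (F n). enat i \<le> \<tau> x} \<in> sets (F n)"
proof (cases i)
  case 0
  then show ?thesis
    using sets.top[of "F n"] by (simp add: zero_enat_def[symmetric])
next
  case (Suc j)
  have "{x \<in> space (F j). \<tau> x \<le> enat j} \<in> sets (F n)"
    using \<tau> F_mono[of j n] \<open>i \<le> n\<close> Suc unfolding enat_stopping_time_def by auto
  then have "space (F n) - {x \<in> space (F j). \<tau> x \<le> enat j} \<in> sets (F n)"
    by (rule sets.compl_sets)
  moreover have "{x \<in> space (F n). enat i \<le> \<tau> x} = space (F n) - {x \<in> space (F j). \<tau> x \<le> enat j}"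
    using Suc by (auto simp: Suc_ile_eq not_le)
  ultimately show ?thesis by simp
qed

lemma borel_measurable_stopped_prod:
  assumes "enat_stopping_time F \<tau>"
  shows "stopped_prod f \<tau> n \<in> borel_measurable (F n)"
  unfolding stopped_prod_def[abs_def]
  by (intro borel_measurable_prod_ennreal measurable_If adapted_le sets_enat_le_stopping_time[OF assms]) auto

lemma nn_integral_stopped_prod_Suc_le:
  assumes \<tau>: "enat_stopping_time F \<tau>"
  shows "(\<integral>\<^sup>+x. stopped_prod f \<tau> (Suc k) x \<partial>P) \<le> (1 + c) * (\<integral>\<^sup>+x. stopped_prod f \<tau> k x \<partial>P)"
proof -
  interpret sigma_finite_subalgebra P "F k" by (rule sigma_finite_subalgebra_F)
  \<comment> \<open>Only the part g still running after time k meets the new factor, and g is F k-measurable.\<close>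
  define h where "h x = (if \<tau> x \<le> enat k then stopped_prod f \<tau> k x else 0)" for x
  define g where "g x = (if \<tau> x \<le> enat k then 0 else stopped_prod f \<tau> k x)" for x
  have stopped: "{x \<in> space (F k). \<tau> x \<le> enat k} \<in> sets (F k)"
    using \<tau> unfolding enat_stopping_time_def by blast
  have g: "g \<in> borel_measurable (F k)" and h: "h \<in> borel_measurable (F k)"
    unfolding g_def[abs_def] h_def[abs_def]
    by (intro measurable_If borel_measurable_stopped_prod[OF \<tau>] stopped; simp)+
  note [measurable] = borel_measurable_F_imp_P[OF g] borel_measurable_F_imp_P[OF h]
    borel_measurable_F_imp_P[OF adapted]
  have "(\<integral>\<^sup>+x. stopped_prod f \<tau> (Suc k) x \<partial>P) = (\<integral>\<^sup>+x. h x + g x * f (Suc k) x \<partial>P)"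
    by (intro nn_integral_cong) (simp add: stopped_prod_Suc h_def g_def)
  also have "\<dots> = (\<integral>\<^sup>+x. h x \<partial>P) + (\<integral>\<^sup>+x. g x * f (Suc k) x \<partial>P)"
    by (rule nn_integral_add) auto
  also have "\<dots> \<le> (1 + c) * (\<integral>\<^sup>+x. h x \<partial>P) + (1 + c) * (\<integral>\<^sup>+x. g x \<partial>P)"
  proof (rule add_mono)
    show "(\<integral>\<^sup>+x. h x \<partial>P) \<le> (1 + c) * (\<integral>\<^sup>+x. h x \<partial>P)"
      using mult_right_mono[of 1 "1 + c" "\<integral>\<^sup>+x. h x \<partial>P"] by simp
    show "(\<integral>\<^sup>+x. g x * f (Suc k) x \<partial>P) \<le> (1 + c) * (\<integral>\<^sup>+x. g x \<partial>P)"
      using g by (rule nn_integral_mult_le_of_nn_cond_exp_le) (auto intro: nn_cond_exp_le)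
  qed
  also have "\<dots> = (1 + c) * (\<integral>\<^sup>+x. h x + g x \<partial>P)"
    by (simp add: nn_integral_add distrib_left)
  also have "(\<integral>\<^sup>+x. h x + g x \<partial>P) = (\<integral>\<^sup>+x. stopped_prod f \<tau> k x \<partial>P)"
    by (intro nn_integral_cong) (simp add: h_def g_def)
  finally show ?thesis .
qed

lemma nn_integral_stopped_prod_le:
  assumes "enat_stopping_time F \<tau>"
  shows "(\<integral>\<^sup>+x. stopped_prod f \<tau> k x \<partial>P) \<le> (1 + c) ^ k * (\<integral>\<^sup>+x. f 0 x \<partial>P)"
proof (induction k)
  case (Suc k)
  have "(\<integral>\<^sup>+x. stopped_prod f \<tau> (Suc k) x \<partial>P) \<le> (1 + c) * (\<integral>\<^sup>+x. stopped_prod f \<tau> k x \<partial>P)"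
    by (rule nn_integral_stopped_prod_Suc_le[OF assms])
  also have "\<dots> \<le> (1 + c) * ((1 + c) ^ k * (\<integral>\<^sup>+x. f 0 x \<partial>P))"
    by (intro mult_left_mono Suc.IH) simp
  finally show ?case by (simp add: mult.assoc)
qed simp

lemma nn_integral_prod_le: "(\<integral>\<^sup>+x. (\<Prod>i\<in>{..k}. f i x) \<partial>P) \<le> (1 + c) ^ k * (\<integral>\<^sup>+x. f 0 x \<partial>P)"
  using nn_integral_stopped_prod_le[OF enat_stopping_time_infinity, of k]
  by (simp add: stopped_prod_infinity)

lemma nn_integral_delta_pos_le:
  assumes "c < \<infinity>" and "(\<integral>\<^sup>+x. f 0 x \<partial>P) < \<infinity>"
  shows "(\<integral>\<^sup>+x. delta_pos P F (\<lambda>n x. \<Prod>i\<in>{..n}. f i x) n x \<partial>P)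
    \<le> c * (1 + c) ^ n * (\<integral>\<^sup>+x. f 0 x \<partial>P)"
proof -
  interpret sigma_finite_subalgebra P "F n" by (rule sigma_finite_subalgebra_F)
  let ?E = "\<lambda>n x. \<Prod>i\<in>{..n}. f i x"
  have finite: "(\<integral>\<^sup>+x. ?E k x \<partial>P) < \<infinity>" for k
    using nn_integral_prod_le[of k] assms by (auto simp: ennreal_mult_less_top power_less_top_ennreal
        intro: le_less_trans)
  note [measurable] = borel_measurable_partial_prod borel_measurable_F_imp_P[OF borel_measurable_partial_prod]
    borel_measurable_F_imp_P[OF adapted]
  \<comment> \<open>in ennreal top - top = top, so the subtraction in delta_pos needs E n finite\<close>
  have "AE x in P. ?E n x \<noteq> \<infinity>"
    using finite[of n] by (intro nn_integral_noteq_infinite) auto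
  moreover have "AE x in P. ?E n x * nn_cond_exp P (F n) (f (Suc n)) x = nn_cond_exp P (F n) (?E (Suc n)) x"
    using nn_cond_exp_prod[of "?E n" "f (Suc n)"] by (simp add: atMost_Suc mult.commute)
  ultimately have "AE x in P. delta_pos P F ?E n x \<le> ?E n x * c"
    using nn_cond_exp_le[of n]
  proof eventually_elim
    case (elim x)
    have "nn_cond_exp P (F n) (?E (Suc n)) x \<le> ?E n x * (1 + c)"
      using elim by (metis mult_left_mono zero_le)
    then show ?case
      using elim(1) finite[of "Suc n"]
      by (simp add: delta_pos_def ennreal_minus_le_iff distrib_left add.commute)
  qed
  then have "(\<integral>\<^sup>+x. delta_pos P F ?E n x \<partial>P) \<le> (\<integral>\<^sup>+x. ?E n x * c \<partial>P)"
    by (rule nn_integral_mono_AE)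
  also have "\<dots> = c * (\<integral>\<^sup>+x. ?E n x \<partial>P)"
    by (subst nn_integral_multc) (auto simp: mult.commute)
  also have "\<dots> \<le> c * (1 + c) ^ n * (\<integral>\<^sup>+x. f 0 x \<partial>P)"
    using nn_integral_prod_le[of n] by (simp add: mult.assoc mult_left_mono)
  finally show ?thesis .
qed

end

lemma sets_gen_filt:
  "sets (gen_filt M e m n) =
     sigma_sets (space M) (\<Union>i\<in>{..n}. {e m i -` B \<inter> space M | B. B \<in> sets borel})"
  unfolding gen_filt_def by (rule sets_measure_of) auto

lemma space_gen_filt [simp]: "space (gen_filt M e m n) = space M"
  unfolding gen_filt_def by (rule space_measure_of) auto

lemma gen_filt_mono: "k \<le> n \<Longrightarrow> sets (gen_filt M e m k) \<subseteq> sets (gen_filt M e m n)"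
  unfolding sets_gen_filt by (rule sigma_sets_mono') fastforce

lemma sets_gen_filt_subset:
  assumes "\<And>i. e m i \<in> borel_measurable M"
  shows "sets (gen_filt M e m n) \<subseteq> sets M"
  unfolding sets_gen_filt using assms by (intro sets.sigma_sets_subset) (auto intro: measurable_sets)

lemma borel_measurable_gen_filt: "i \<le> n \<Longrightarrow> e m i \<in> borel_measurable (gen_filt M e m n)"
  by (rule measurableI) (auto simp: sets_gen_filt)

lemma cond_bounded_factors_gen_filt:
  assumes "prob_space P" "sets P = sets M" and "\<And>i. e m i \<in> borel_measurable M"
    and "\<And>n. AE x in P. nn_cond_exp P (gen_filt M e m n) (e m (Suc n)) x \<le> 1 + c"
  shows "cond_bounded_factors P (gen_filt M e m) (e m) c"
proof (intro cond_bounded_factors.intro cond_bounded_factors_axioms.intro)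
  show "subalgebra P (gen_filt M e m n)" for n
    using sets_gen_filt_subset[of e m M n] assms(2,3) sets_eq_imp_space_eq[OF assms(2)]
    by (simp add: subalgebra_def)
qed (auto simp: assms intro: gen_filt_mono[THEN subsetD] borel_measurable_gen_filt)

lemma prod_proc_eq: "prod_proc e m = (\<lambda>n x. \<Prod>i\<in>{..n}. e m i x)"
  by (simp add: prod_proc_def fun_eq_iff)

context
  fixes M :: "'a measure" and Ps :: "'a measure set"
    and e :: "nat \<Rightarrow> nat \<Rightarrow> 'a \<Rightarrow> ennreal" and d :: "nat \<Rightarrow> real"
  assumes Ps: "prob_family M Ps"
    and meas: "\<And>m n. e m n \<in> borel_measurable M"
    and d_nonneg: "\<And>m. d m \<ge> 0"
    and cond: "\<And>m n P. P \<in> Ps \<Longrightarrow>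
       AE x in P. nn_cond_exp P (gen_filt M e m n) (e m (Suc n)) x \<le> 1 + ennreal (d m)"
begin

lemma cond_bounded_factors_family:
  "P \<in> Ps \<Longrightarrow> cond_bounded_factors P (gen_filt M e m) (e m) (ennreal (d m))"
  using Ps meas cond unfolding prob_family_def by (intro cond_bounded_factors_gen_filt) auto

lemma SUP_delta_pos_le:
  assumes "(SUP P\<in>Ps. \<integral>\<^sup>+x. e m 0 x \<partial>P) < \<infinity>"
  shows "(SUP P\<in>Ps. \<integral>\<^sup>+x. delta_pos P (gen_filt M e m) (prod_proc e m) n x \<partial>P)
    \<le> ennreal (d m) * (1 + ennreal (d m)) ^ n * (SUP P\<in>Ps. \<integral>\<^sup>+x. e m 0 x \<partial>P)"
proof (rule SUP_least)
  fix P assume "P \<in> Ps"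
  then interpret cond_bounded_factors P "gen_filt M e m" "e m" "ennreal (d m)"
    by (rule cond_bounded_factors_family)
  have "(\<integral>\<^sup>+x. e m 0 x \<partial>P) < \<infinity>"
    using assms \<open>P \<in> Ps\<close> by (auto intro: le_less_trans SUP_upper)
  then have "(\<integral>\<^sup>+x. delta_pos P (gen_filt M e m) (prod_proc e m) n x \<partial>P)
      \<le> ennreal (d m) * (1 + ennreal (d m)) ^ n * (\<integral>\<^sup>+x. e m 0 x \<partial>P)"
    unfolding prod_proc_eq by (intro nn_integral_delta_pos_le) auto
  also have "\<dots> \<le> ennreal (d m) * (1 + ennreal (d m)) ^ n * (SUP P\<in>Ps. \<integral>\<^sup>+x. e m 0 x \<partial>P)"
    using \<open>P \<in> Ps\<close> by (intro mult_left_mono SUP_upper) auto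
  finally show "(\<integral>\<^sup>+x. delta_pos P (gen_filt M e m) (prod_proc e m) n x \<partial>P) \<le> \<dots>" .
qed

lemma SUP_stopped_le:
  assumes "\<tau> \<in> bounded_stopping_times (enat k) (gen_filt M e m) Ps"
  shows "(SUP P\<in>Ps. \<integral>\<^sup>+x. stopped (prod_proc e m) \<tau> x \<partial>P)
    \<le> (1 + ennreal (d m)) ^ k * (SUP P\<in>Ps. \<integral>\<^sup>+x. e m 0 x \<partial>P)"
proof (rule SUP_least)
  fix P assume "P \<in> Ps"
  then interpret cond_bounded_factors P "gen_filt M e m" "e m" "ennreal (d m)"
    by (rule cond_bounded_factors_family)
  have \<tau>: "enat_stopping_time (gen_filt M e m) \<tau>" and "AE x in P. \<tau> x \<le> enat k"
    using assms \<open>P \<in> Ps\<close> unfolding bounded_stopping_times_def by auto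
  then have "(\<integral>\<^sup>+x. stopped (prod_proc e m) \<tau> x \<partial>P) = (\<integral>\<^sup>+x. stopped_prod (e m) \<tau> k x \<partial>P)"
    unfolding prod_proc_eq by (intro nn_integral_cong_AE) (auto elim!: eventually_mono stopped_eq_stopped_prod)
  also have "\<dots> \<le> (1 + ennreal (d m)) ^ k * (\<integral>\<^sup>+x. e m 0 x \<partial>P)"
    by (rule nn_integral_stopped_prod_le[OF \<tau>])
  also have "\<dots> \<le> (1 + ennreal (d m)) ^ k * (SUP P\<in>Ps. \<integral>\<^sup>+x. e m 0 x \<partial>P)"
    using \<open>P \<in> Ps\<close> by (intro mult_left_mono SUP_upper) auto
  finally show "(\<integral>\<^sup>+x. stopped (prod_proc e m) \<tau> x \<partial>P) \<le> \<dots>" .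
qed

lemma asymp_supermart_prod_proc:
  assumes "asymp_evar Ps (\<lambda>m. e m 0)" and "d \<longlonglongrightarrow> 0"
  shows "asymp_supermart Ps (gen_filt M e) (prod_proc e)"
  unfolding asymp_supermart_def
proof
  fix n
  define S where "S m = (SUP P\<in>Ps. \<integral>\<^sup>+x. e m 0 x \<partial>P)" for m
  have S: "limsup S \<le> 1"
    using assms(1) unfolding asymp_evar_def S_def by simp
  let ?a = "\<lambda>m. ennreal (d m) * (1 + ennreal (d m)) ^ n"
  have "(\<lambda>m. ennreal (d m * (1 + d m) ^ n)) \<longlonglongrightarrow> ennreal (0 * (1 + 0) ^ n)"
    by (intro tendsto_ennrealI tendsto_intros assms(2))
  moreover have "?a = (\<lambda>m. ennreal (d m * (1 + d m) ^ n))"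
    using d_nonneg by (simp add: ennreal_mult ennreal_plus fun_eq_iff flip: ennreal_power)
  ultimately have a: "?a \<longlonglongrightarrow> 0"
    by simp
  have "eventually (\<lambda>m. S m < \<infinity>) sequentially"
    using S by (intro Limsup_lessD) (simp add: order.strict_trans1)
  then have "eventually (\<lambda>m. (SUP P\<in>Ps. \<integral>\<^sup>+x. delta_pos P (gen_filt M e m) (prod_proc e m) n x \<partial>P)
      \<le> ?a m * S m) sequentially"
    unfolding S_def by (auto elim!: eventually_mono intro: SUP_delta_pos_le)
  then have "limsup (\<lambda>m. SUP P\<in>Ps. \<integral>\<^sup>+x. delta_pos P (gen_filt M e m) (prod_proc e m) n x \<partial>P) \<le> 0"
    by (rule limsup_le_of_eventually_le_mult[OF _ a _ S]) simp
  then show "(\<lambda>m. SUP P\<in>Ps. \<integral>\<^sup>+x. delta_pos P (gen_filt M e m) (prod_proc e m) n x \<partial>P) \<longlonglongrightarrow> 0"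
    by (intro tendsto_0_if_Limsup_eq_0_ennreal) simp
qed

lemma r_asymp_eproc_prod_proc:
  assumes "asymp_evar Ps (\<lambda>m. e m 0)" and r: "(\<lambda>m. real (r m) * d m) \<longlonglongrightarrow> 0"
  shows "r_asymp_eproc r Ps (gen_filt M e) (prod_proc e)"
  unfolding r_asymp_eproc_def
proof (intro allI impI)
  fix \<tau> assume \<tau>: "\<forall>m. \<tau> m \<in> bounded_stopping_times (enat (r m)) (gen_filt M e m) Ps"
  have "(\<lambda>m. (1 + ennreal (d m)) ^ r m) = (\<lambda>m. ennreal ((1 + d m) ^ r m))"
    using d_nonneg by (simp add: ennreal_plus fun_eq_iff flip: ennreal_power)
  then have a: "(\<lambda>m. (1 + ennreal (d m)) ^ r m) \<longlonglongrightarrow> 1"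
    using tendsto_ennrealI[OF tendsto_one_plus_power[OF d_nonneg r]] by simp
  have S: "limsup (\<lambda>m. SUP P\<in>Ps. \<integral>\<^sup>+x. e m 0 x \<partial>P) \<le> 1"
    using assms(1) unfolding asymp_evar_def by simp
  have "\<forall>m. (SUP P\<in>Ps. \<integral>\<^sup>+x. stopped (prod_proc e m) (\<tau> m) x \<partial>P)
      \<le> (1 + ennreal (d m)) ^ r m * (SUP P\<in>Ps. \<integral>\<^sup>+x. e m 0 x \<partial>P)"
    using \<tau> by (blast intro: SUP_stopped_le)
  then show "limsup (\<lambda>m. SUP P\<in>Ps. \<integral>\<^sup>+x. stopped (prod_proc e m) (\<tau> m) x \<partial>P) \<le> 1"
    by (intro limsup_le_of_eventually_le_mult[OF always_eventually a _ S]) simp_all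
qed

end

theorem mainTheorem10:
  fixes M :: "'a measure" and Ps :: "'a measure set"
    and e :: "nat \<Rightarrow> nat \<Rightarrow> 'a \<Rightarrow> ennreal" and d :: "nat \<Rightarrow> real"
  assumes Ps: "prob_family M Ps"
    and meas: "\<And>m n. e m n \<in> borel_measurable M"
    and evar: "\<And>n. asymp_evar Ps (\<lambda>m. e m n)"
    and d_nonneg: "\<And>m. d m \<ge> 0"
    and cond: "\<And>m n P. P \<in> Ps \<Longrightarrow>
       AE x in P. nn_cond_exp P (gen_filt M e m n) (e m (Suc n)) x \<le> 1 + ennreal (d m)"
    and d_lim: "d \<longlonglongrightarrow> 0"
  shows "asymp_supermart Ps (gen_filt M e) (prod_proc e)
       \<and> (\<forall>r :: nat \<Rightarrow> nat. (\<lambda>m. real (r m) * d m) \<longlonglongrightarrow> 0 \<longrightarrow>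
            r_asymp_eproc r Ps (gen_filt M e) (prod_proc e))"
  using asymp_supermart_prod_proc[OF Ps meas d_nonneg cond evar d_lim]
    r_asymp_eproc_prod_proc[OF Ps meas d_nonneg cond evar]
  by blast

end
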